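(* For $n\ge1$ let $\mathcal{S}_{2n}=\{-n,\dots,-1,1,\dots,n\}$ and $\mathcal{S}_{2n+1}=\mathcal{S}_{2n}\cup\{0\}$. For $m\ge2$ let $T_m(z)=\sum_{\ell\ge0}t_{m,\ell}z^\ell$, where $t_{m,\ell}$ is the number of walks $0=y_0,y_1,\dots,y_\ell=-1$ with steps $y_i-y_{i-1}\in\mathcal{S}_m$ and $y_i\ge0$ for all $0\le i<\ell$ (walks absorbed at $-1$). Then the coefficients of $T_2(z)$ are the Catalan numbers ($[z^{2n+1}]T_2=\frac1{n+1}\binom{2n}{n}$, even coefficients zero), the coefficients of $T_3(z)$ are the Motzkin numbers ($[z^{n+1}]T_3$ is the $n$-th Motzkin number), and $T_4(z)=G_{0,1}(z)$, where $[z^\ell]G_{0,1}(z)$ is the number of walks $0=y_0,\dots,y_\ell=1$ with steps in $\{-2,-1,1,2\}$ and $y_i\ge1$ for all $1\le i\le\ell$.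
   Context: The $n$-th Motzkin number is the number of walks of length $n$ from $0$ to $0$ with steps in $\{-1,0,1\}$ never going below $0$. *)

theory Defs
  imports Complex_Main "HOL-Computational_Algebra.Formal_Power_Series"
begin

definition step_set :: "nat \<Rightarrow> int set" where
  "step_set m = (let n = int (m div 2) in
     {-n..-1} \<union> {1..n} \<union> (if odd m then {0} else {}))"

definition absorbed_walks :: "nat \<Rightarrow> nat \<Rightarrow> int list set" where
  "absorbed_walks m l = {ys. length ys = Suc l \<and> ys ! 0 = 0 \<and> ys ! l = -1 \<and>
      (\<forall>i\<in>{1..l}. ys ! i - ys ! (i - 1) \<in> step_set m) \<and>
      (\<forall>i<l. ys ! i \<ge> 0)}"

definition t_coeff :: "nat \<Rightarrow> nat \<Rightarrow> nat" where
  "t_coeff m l = card (absorbed_walks m l)"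

definition T :: "nat \<Rightarrow> real fps" where
  "T m = Abs_fps (\<lambda>l. real (t_coeff m l))"

definition G01_walks :: "nat \<Rightarrow> int list set" where
  "G01_walks l = {ys. length ys = Suc l \<and> ys ! 0 = 0 \<and> ys ! l = 1 \<and>
      (\<forall>i\<in>{1..l}. ys ! i - ys ! (i - 1) \<in> {-2, -1, 1, 2}) \<and>
      (\<forall>i\<in>{1..l}. ys ! i \<ge> 1)}"

definition G01 :: "real fps" where
  "G01 = Abs_fps (\<lambda>l. real (card (G01_walks l)))"

definition motzkin_walks :: "nat \<Rightarrow> int list set" where
  "motzkin_walks n = {ys. length ys = Suc n \<and> ys ! 0 = 0 \<and> ys ! n = 0 \<and>
      (\<forall>i\<in>{1..n}. ys ! i - ys ! (i - 1) \<in> {-1, 0, 1}) \<and>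
      (\<forall>i\<le>n. ys ! i \<ge> 0)}"

definition motzkin :: "nat \<Rightarrow> nat" where
  "motzkin n = card (motzkin_walks n)"

end

theory Submission
  imports Defs
begin

text \<open>When no step goes below \<open>-1\<close> (the sets \<open>S\<^sub>2\<close> and \<open>S\<^sub>3\<close>), an absorbed walk of
  length \<open>l + 1\<close> is a nonnegative walk of length \<open>l\<close> from \<open>0\<close> to \<open>0\<close> followed by the step
  \<open>-1\<close>. For \<open>S\<^sub>3\<close> these are Motzkin paths by definition; for \<open>S\<^sub>2\<close> they are Dyck paths,
  and nonnegative \<open>\<plusminus>1\<close>-walks of length \<open>l\<close> ending at height \<open>l - 2j\<close> are counted by the
  ballot numbers \<open>binomial l j - binomial l (j - 1)\<close>, since both satisfy Pascal's recurrence;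
  at \<open>l = 2n\<close>, \<open>j = n\<close> this is the Catalan number. For \<open>S\<^sub>4\<close>, which is symmetric,
  reading an absorbed walk backwards and shifting it up by one is a bijection onto the
  walks counted by \<open>G\<^sub>0\<^sub>,\<^sub>1\<close>.\<close>

definition nonneg_walks :: "int set \<Rightarrow> nat \<Rightarrow> int \<Rightarrow> int list set" where
  "nonneg_walks S l k = {ys. length ys = Suc l \<and> ys ! 0 = 0 \<and> ys ! l = k \<and>
      (\<forall>i\<in>{1..l}. ys ! i - ys ! (i - 1) \<in> S) \<and> (\<forall>i\<le>l. ys ! i \<ge> 0)}"

lemma steps_snoc:
  assumes "length zs = Suc l"
  shows "(\<forall>i\<in>{1..Suc l}. (zs @ [x]) ! i - (zs @ [x]) ! (i - 1) \<in> S) \<longleftrightarrow>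
         (\<forall>i\<in>{1..l}. zs ! i - zs ! (i - 1) \<in> S) \<and> x - zs ! l \<in> S"
  using assms by (auto simp: nth_append atLeastAtMostSuc_conv)

lemma snoc_in_nonneg_walks_iff:
  assumes "length zs = Suc l"
  shows "zs @ [x] \<in> nonneg_walks S (Suc l) k \<longleftrightarrow>
         x = k \<and> 0 \<le> k \<and> zs \<in> nonneg_walks S l (zs ! l) \<and> k - zs ! l \<in> S"
proof -
  have "(\<forall>i\<le>Suc l. (zs @ [x]) ! i \<ge> 0) \<longleftrightarrow> (\<forall>i\<le>l. zs ! i \<ge> 0) \<and> x \<ge> 0"
    using assms by (auto simp: nth_append le_Suc_eq)
  then show ?thesis
    using assms steps_snoc[OF assms] by (auto simp: nonneg_walks_def nth_append)
qed

lemma snoc_in_absorbed_walks_iff: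
  assumes "length zs = Suc l"
  shows "zs @ [x] \<in> absorbed_walks m (Suc l) \<longleftrightarrow>
         x = -1 \<and> zs \<in> nonneg_walks (step_set m) l (zs ! l) \<and> -1 - zs ! l \<in> step_set m"
proof -
  have "(\<forall>i<Suc l. (zs @ [x]) ! i \<ge> 0) \<longleftrightarrow> (\<forall>i\<le>l. zs ! i \<ge> 0)"
    using assms by (auto simp: nth_append less_Suc_eq_le)
  then show ?thesis
    using assms steps_snoc[OF assms]
    by (auto simp: absorbed_walks_def nonneg_walks_def nth_append)
qed

lemma length_Suc_snoc:
  assumes "length ys = Suc (Suc l)"
  obtains zs x where "ys = zs @ [x]" and "length zs = Suc l"
  using assms by (metis length_Suc_conv_rev)

lemma nonneg_walks_Suc_iff:
  "ys \<in> nonneg_walks S (Suc l) k \<longleftrightarrow>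
   0 \<le> k \<and> (\<exists>zs k'. ys = zs @ [k] \<and> zs \<in> nonneg_walks S l k' \<and> k - k' \<in> S)"
proof (cases "length ys = Suc (Suc l)")
  case True
  then obtain zs x where "ys = zs @ [x]" "length zs = Suc l" by (rule length_Suc_snoc)
  then show ?thesis
    using snoc_in_nonneg_walks_iff by (auto simp: nonneg_walks_def)
next
  case False
  then show ?thesis by (auto simp: nonneg_walks_def)
qed

lemma absorbed_walks_0: "absorbed_walks m 0 = {}"
  by (auto simp: absorbed_walks_def)

lemma absorbed_walks_Suc_eq:
  assumes "-1 \<in> step_set m" and "step_set m \<subseteq> {-1..}"
  shows "absorbed_walks m (Suc l) = (\<lambda>zs. zs @ [-1]) ` nonneg_walks (step_set m) l 0"
proof (intro set_eqI iffI)
  fix ys assume ys: "ys \<in> absorbed_walks m (Suc l)"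
  then have "length ys = Suc (Suc l)" by (simp add: absorbed_walks_def)
  then obtain zs x where zs: "ys = zs @ [x]" "length zs = Suc l" by (rule length_Suc_snoc)
  with ys have "x = -1" and walk: "zs \<in> nonneg_walks (step_set m) l (zs ! l)"
    and "-1 - zs ! l \<in> step_set m"
    using snoc_in_absorbed_walks_iff by blast+
  moreover have "zs ! l \<ge> 0" using walk by (simp add: nonneg_walks_def)
  ultimately have "zs ! l = 0" using assms(2) by force
  then show "ys \<in> (\<lambda>zs. zs @ [-1]) ` nonneg_walks (step_set m) l 0"
    using zs walk \<open>x = -1\<close> by auto
next
  fix ys assume "ys \<in> (\<lambda>zs. zs @ [-1]) ` nonneg_walks (step_set m) l 0"
  then obtain zs where "ys = zs @ [-1]" "zs \<in> nonneg_walks (step_set m) l 0" by blast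
  then show "ys \<in> absorbed_walks m (Suc l)"
    using assms(1) snoc_in_absorbed_walks_iff[of zs l] by (auto simp: nonneg_walks_def)
qed

lemma t_coeff_Suc_eq_card_nonneg_walks:
  assumes "-1 \<in> step_set m" and "step_set m \<subseteq> {-1..}"
  shows "t_coeff m (Suc l) = card (nonneg_walks (step_set m) l 0)"
  unfolding t_coeff_def absorbed_walks_Suc_eq[OF assms]
  by (rule card_image) (auto simp: inj_on_def)

lemma step_set_2: "step_set 2 = {-1, 1}"
  by (auto simp: step_set_def)

lemma step_set_3: "step_set 3 = {-1, 0, 1}"
  by (auto simp: step_set_def)

lemma step_set_4: "step_set 4 = {-2, -1, 1, 2}"
  by (auto simp: step_set_def)

fun dyck_count :: "nat \<Rightarrow> int \<Rightarrow> nat" where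
  "dyck_count 0 k = (if k = 0 then 1 else 0)"
| "dyck_count (Suc l) k = (if k < 0 then 0 else dyck_count l (k - 1) + dyck_count l (k + 1))"

lemma nonneg_walks_0: "nonneg_walks S 0 k = (if k = 0 then {[0]} else {})"
  by (auto simp: nonneg_walks_def length_Suc_conv)

lemma nonneg_walks_pm_Suc:
  "nonneg_walks {-1, 1} (Suc l) k = (if k < 0 then {} else
     (\<lambda>zs. zs @ [k]) ` (nonneg_walks {-1, 1} l (k - 1) \<union> nonneg_walks {-1, 1} l (k + 1)))"
  by (auto simp: nonneg_walks_Suc_iff algebra_simps) force+

lemma card_nonneg_walks_pm:
  "finite (nonneg_walks {-1, 1} l k) \<and> card (nonneg_walks {-1, 1} l k) = dyck_count l k"
proof (induction l arbitrary: k)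
  case 0
  then show ?case by (simp add: nonneg_walks_0)
next
  case (Suc l)
  have "nonneg_walks {-1, 1} l (k - 1) \<inter> nonneg_walks {-1, 1} l (k + 1) = {}"
    by (auto simp: nonneg_walks_def)
  moreover have "card ((\<lambda>zs. zs @ [k]) ` A) = card A" for A :: "int list set"
    by (rule card_image) (simp add: inj_on_def)
  ultimately show ?case
    using Suc.IH[of "k - 1"] Suc.IH[of "k + 1"]
    by (simp add: nonneg_walks_pm_Suc card_Un_disjoint)
qed

lemma dyck_count_nonzero:
  "dyck_count l k \<noteq> 0 \<Longrightarrow> 0 \<le> k \<and> k \<le> int l \<and> even (int l - k)"
proof (induction l arbitrary: k)
  case 0
  then show ?case by (simp split: if_splits)
next
  case (Suc l)
  then have "0 \<le> k" and "dyck_count l (k - 1) \<noteq> 0 \<or> dyck_count l (k + 1) \<noteq> 0"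
    by (auto split: if_splits)
  then show ?case
    using Suc.IH[of "k - 1"] Suc.IH[of "k + 1"] by (auto; presburger)
qed

definition ballot_number :: "nat \<Rightarrow> nat \<Rightarrow> int" where
  "ballot_number l j = int (l choose j) - (if j = 0 then 0 else int (l choose (j - 1)))"

lemma ballot_number_Suc:
  "j \<ge> 1 \<Longrightarrow> ballot_number (Suc l) j = ballot_number l j + ballot_number l (j - 1)"
  by (cases j; cases "j - 1") (auto simp: ballot_number_def)

lemma ballot_number_odd_middle: "ballot_number (2 * i + 1) (Suc i) = 0"
  using binomial_symmetric[of "Suc i" "2 * i + 1"] by (simp add: ballot_number_def)

lemma dyck_count_eq_ballot_number:
  "2 * j \<le> l \<Longrightarrow> int (dyck_count l (int l - 2 * int j)) = ballot_number l j"
proof (induction l arbitrary: j)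
  case 0
  then show ?case by (simp add: ballot_number_def)
next
  case (Suc l)
  define k where "k = int (Suc l) - 2 * int j"
  have down: "int (dyck_count l (k - 1)) = (if 2 * j \<le> l then ballot_number l j else 0)"
  proof (cases "2 * j \<le> l")
    case True
    then show ?thesis using Suc.IH[OF True] by (simp add: k_def)
  next
    case False
    then show ?thesis using dyck_count_nonzero[of l "k - 1"] Suc.prems by (auto simp: k_def)
  qed
  have up: "int (dyck_count l (k + 1)) = (if j \<ge> 1 then ballot_number l (j - 1) else 0)"
  proof (cases "j \<ge> 1")
    case True
    then have k: "k + 1 = int l - 2 * int (j - 1)" and j: "2 * (j - 1) \<le> l"
      using Suc.prems by (auto simp: k_def of_nat_diff)
    show ?thesis unfolding k using Suc.IH[OF j] True by simp
  next
    case False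
    then show ?thesis using dyck_count_nonzero[of l "k + 1"] by (auto simp: k_def)
  qed
  have "2 * j = Suc l \<Longrightarrow> ballot_number l j = 0"
    using ballot_number_odd_middle[of "j - 1"] by (cases j) auto
  then have "int (dyck_count (Suc l) k) = ballot_number (Suc l) j"
    using down up Suc.prems ballot_number_Suc[of j l]
    by (cases "j = 0") (auto simp: k_def ballot_number_def)
  then show ?case by (simp add: k_def)
qed

lemma ballot_number_middle:
  "real_of_int (ballot_number (2 * n) n) = real ((2 * n) choose n) / real (n + 1)"
proof (cases n)
  case 0
  then show ?thesis by (simp add: ballot_number_def)
next
  case (Suc i)
  have "n * ((2 * n) choose n) = (n + 1) * ((2 * n) choose i)"
    using Suc_times_binomial_add[of i "Suc i"] Suc by (simp add: mult_2)
  then have "real (n + 1) * real_of_int (ballot_number (2 * n) n) = real ((2 * n) choose n)"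
    using Suc by (simp add: ballot_number_def algebra_simps flip: of_nat_mult)
  then show ?thesis by (simp add: field_simps)
qed

lemma ball_reflect: "(\<forall>i\<in>{1..l}. P (Suc l - i)) \<longleftrightarrow> (\<forall>j\<in>{1..l}. P j)"
proof
  assume H: "\<forall>i\<in>{1..l}. P (Suc l - i)"
  show "\<forall>j\<in>{1..l}. P j"
  proof
    fix j assume "j \<in> {1..l}"
    then have "Suc l - j \<in> {1..l}" "Suc l - (Suc l - j) = j" by auto
    then show "P j" using H by metis
  qed
next
  assume H: "\<forall>j\<in>{1..l}. P j"
  show "\<forall>i\<in>{1..l}. P (Suc l - i)"
  proof
    fix i assume "i \<in> {1..l}"
    then have "Suc l - i \<in> {1..l}" by auto
    then show "P (Suc l - i)" using H by blast
  qed
qed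

lemma reversed_shift_in_G01_walks_iff:
  assumes len: "length ys = Suc l"
  shows "rev (map (\<lambda>y. y + 1) ys) \<in> G01_walks l \<longleftrightarrow> ys \<in> absorbed_walks 4 l"
proof -
  define ws where "ws = rev (map (\<lambda>y. y + 1) ys)"
  have ws_nth: "ws ! i = ys ! (l - i) + 1" if "i \<le> l" for i
    using that len by (simp add: ws_def rev_nth)
  have "(\<forall>i\<in>{1..l}. ws ! i - ws ! (i - 1) \<in> {-2, -1, 1, 2}) \<longleftrightarrow>
        (\<forall>i\<in>{1..l}. ys ! (Suc l - i) - ys ! (Suc l - i - 1) \<in> {-2, -1, 1, 2})"
    by (intro ball_cong refl) (auto simp: ws_nth Suc_diff_le)
  also have "\<dots> \<longleftrightarrow> (\<forall>i\<in>{1..l}. ys ! i - ys ! (i - 1) \<in> step_set 4)"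
    using ball_reflect[of l "\<lambda>j. ys ! j - ys ! (j - 1) \<in> {-2, -1, 1, 2}"]
    by (simp add: step_set_4)
  finally have steps: "\<dots> \<longleftrightarrow> (\<forall>i\<in>{1..l}. ws ! i - ws ! (i - 1) \<in> {-2, -1, 1, 2})" ..
  have "(\<forall>i\<in>{1..l}. ws ! i \<ge> 1) \<longleftrightarrow> (\<forall>i\<in>{1..l}. ys ! (Suc l - i - 1) \<ge> 0)"
    by (intro ball_cong refl) (auto simp: ws_nth)
  also have "\<dots> \<longleftrightarrow> (\<forall>i<l. ys ! i \<ge> 0)"
  proof
    assume H: "\<forall>i\<in>{1..l}. ys ! (Suc l - i - 1) \<ge> 0"
    show "\<forall>i<l. ys ! i \<ge> 0"
    proof (intro allI impI)
      fix i assume "i < l"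
      then have "l - i \<in> {1..l}" "Suc l - (l - i) - 1 = i" by auto
      then show "ys ! i \<ge> 0" using H by metis
    qed
  qed auto
  finally have nonneg: "\<dots> \<longleftrightarrow> (\<forall>i\<in>{1..l}. ws ! i \<ge> 1)" ..
  show ?thesis
    unfolding ws_def[symmetric] G01_walks_def absorbed_walks_def
    using steps nonneg ws_nth[of 0] ws_nth[of l] len by (auto simp: ws_def)
qed

lemma bij_betw_absorbed_walks_4_G01_walks:
  "bij_betw (\<lambda>ys. rev (map (\<lambda>y. y + 1) ys)) (absorbed_walks 4 l) (G01_walks l)"
proof (rule bij_betw_byWitness[where f' = "\<lambda>ws. rev (map (\<lambda>w. w - 1) ws)"])
  show "(\<lambda>ys. rev (map (\<lambda>y. y + 1) ys)) ` absorbed_walks 4 l \<subseteq> G01_walks l"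
    using reversed_shift_in_G01_walks_iff by (auto simp: absorbed_walks_def)
  show "(\<lambda>ws. rev (map (\<lambda>w. w - 1) ws)) ` G01_walks l \<subseteq> absorbed_walks 4 l"
    using reversed_shift_in_G01_walks_iff[of "rev (map (\<lambda>w. w - 1) ws)" l for ws]
    by (auto simp: G01_walks_def rev_map comp_def)
qed (simp_all add: rev_map comp_def)

theorem proposition5p1:
  shows "(\<forall>n. fps_nth (T 2) (2 * n + 1) = real ((2 * n) choose n) / real (n + 1))
       \<and> (\<forall>n. fps_nth (T 2) (2 * n) = 0)
       \<and> (\<forall>n. fps_nth (T 3) (n + 1) = real (motzkin n))
       \<and> T 4 = G01"
proof -
  have T2: "t_coeff 2 (Suc l) = dyck_count l 0" for l
    using t_coeff_Suc_eq_card_nonneg_walks[of 2 l] card_nonneg_walks_pm[of l 0]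
    by (simp add: step_set_2)
  have "fps_nth (T 2) (2 * n + 1) = real ((2 * n) choose n) / real (n + 1)" for n
    using T2[of "2 * n"] dyck_count_eq_ballot_number[of n "2 * n"] ballot_number_middle[of n]
    by (simp add: T_def)
  moreover have "fps_nth (T 2) (2 * n) = 0" for n
  proof (cases n)
    case 0
    then show ?thesis by (simp add: T_def t_coeff_def absorbed_walks_0)
  next
    case (Suc i)
    then have "2 * n = Suc (2 * i + 1)" by simp
    moreover have "dyck_count (2 * i + 1) 0 = 0"
      using dyck_count_nonzero[of "2 * i + 1" 0] by (auto simp del: dyck_count.simps)
    ultimately show ?thesis
      using T2[of "2 * i + 1"] by (simp add: T_def del: dyck_count.simps)
  qed
  moreover have "fps_nth (T 3) (n + 1) = real (motzkin n)" for n
    using t_coeff_Suc_eq_card_nonneg_walks[of 3 n]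
    by (simp add: T_def motzkin_def motzkin_walks_def nonneg_walks_def step_set_3)
  moreover have "T 4 = G01"
    using bij_betw_same_card[OF bij_betw_absorbed_walks_4_G01_walks]
    by (simp add: T_def G01_def t_coeff_def)
  ultimately show ?thesis by blast
qed

end
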